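(* Assume $\bar p=\mu\cdot\mathbf p=1/2$. There is a constant $A>0$ such that for every initial distribution $\eta$ on $\mathcal R$ and all $n\ge1$, $$E_\eta\Big[\Big(\sum_{i=1}^n(\tilde G_i-1)\Big)^4\Big]\le An^2.$$
   Context: Let $\mathcal R=\{1,\dots,N\}$ and let $K$ be a stochastic matrix on $\mathcal R$ whose Markov chain has a unique closed irreducible subset; let $\mu$ (row vector) be its unique stationary distribution. Fix $p:\mathcal R\to(0,1)$, $\mathbf p=(p(1),\dots,p(N))^t$. Under $P_\eta$, $(R_j)_{j\ge1}$ is a Markov chain with transition matrix $K$ and $R_1\sim\eta$, and given $(R_j)$ the $\xi(j)$ are independent Bernoulli$(p(R_j))$. Let $F_m=\inf\{k\ge0:\sum_{j=1}^{k+m}\xi(j)=m\}$ (number of failures before the $m$-th success), $F_0=0$, and $\tilde G_m=F_m-F_{m-1}$. *)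

theory Defs
  imports "HOL-Probability.Probability"
begin

text \<open>Markov kernel on a finite state space 's (playing the role of R = {1..N}).\<close>

definition stochastic_matrix :: "('s::finite \<Rightarrow> 's \<Rightarrow> real) \<Rightarrow> bool" where
  "stochastic_matrix K \<longleftrightarrow> (\<forall>x y. 0 \<le> K x y) \<and> (\<forall>x. (\<Sum>y\<in>UNIV. K x y) = 1)"

definition prob_vector :: "('s::finite \<Rightarrow> real) \<Rightarrow> bool" where
  "prob_vector \<eta> \<longleftrightarrow> (\<forall>x. 0 \<le> \<eta> x) \<and> (\<Sum>x\<in>UNIV. \<eta> x) = 1"

definition stationary :: "('s::finite \<Rightarrow> 's \<Rightarrow> real) \<Rightarrow> ('s \<Rightarrow> real) \<Rightarrow> bool" where
  "stationary K \<mu> \<longleftrightarrow> prob_vector \<mu> \<and> (\<forall>y. (\<Sum>x\<in>UNIV. \<mu> x * K x y) = \<mu> y)"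

definition reaches :: "('s \<Rightarrow> 's \<Rightarrow> real) \<Rightarrow> 's \<Rightarrow> 's \<Rightarrow> bool" where
  "reaches K x y \<longleftrightarrow> (x, y) \<in> {(a, b). 0 < K a b}\<^sup>*"

definition closed_set :: "('s \<Rightarrow> 's \<Rightarrow> real) \<Rightarrow> 's set \<Rightarrow> bool" where
  "closed_set K C \<longleftrightarrow> (\<forall>x\<in>C. \<forall>y. 0 < K x y \<longrightarrow> y \<in> C)"

definition closed_irreducible :: "('s \<Rightarrow> 's \<Rightarrow> real) \<Rightarrow> 's set \<Rightarrow> bool" where
  "closed_irreducible K C \<longleftrightarrow> C \<noteq> {} \<and> closed_set K C \<and> (\<forall>x\<in>C. \<forall>y\<in>C. reaches K x y)"

text \<open>The joint law P_eta of (R_j, xi(j))_{j>=1}: R Markov(eta, K), and given R the xi(j)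
  independent Bernoulli(p(R_j)); characterised by all finite-dimensional distributions.\<close>

definition has_law ::
  "('s::finite \<Rightarrow> 's \<Rightarrow> real) \<Rightarrow> ('s \<Rightarrow> real) \<Rightarrow> ('s \<Rightarrow> real) \<Rightarrow> 'a measure
     \<Rightarrow> (nat \<Rightarrow> 'a \<Rightarrow> 's) \<Rightarrow> (nat \<Rightarrow> 'a \<Rightarrow> bool) \<Rightarrow> bool" where
  "has_law K p \<eta> M R \<xi> \<longleftrightarrow>
     prob_space M \<and>
     (\<forall>j. R j \<in> measurable M (count_space UNIV)) \<and>
     (\<forall>j. \<xi> j \<in> measurable M (count_space UNIV)) \<and>
     (\<forall>m rs bs. 1 \<le> m \<longrightarrow> length rs = m \<longrightarrow> length bs = m \<longrightarrow>
        measure M {\<omega> \<in> space M. \<forall>j<m. R (Suc j) \<omega> = rs ! j \<and> \<xi> (Suc j) \<omega> = bs ! j}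
        = \<eta> (rs ! 0) * (\<Prod>j<m - 1. K (rs ! j) (rs ! Suc j))
            * (\<Prod>j<m. if bs ! j then p (rs ! j) else 1 - p (rs ! j)))"

text \<open>F_m = number of failures before the m-th success: least k with sum_{j=1}^{k+m} xi(j) = m.\<close>

definition failures :: "(nat \<Rightarrow> 'a \<Rightarrow> bool) \<Rightarrow> nat \<Rightarrow> 'a \<Rightarrow> nat" where
  "failures \<xi> m \<omega> = (LEAST k. (\<Sum>j=1..k+m. (if \<xi> j \<omega> then 1 else 0 :: nat)) = m)"

definition Gt :: "(nat \<Rightarrow> 'a \<Rightarrow> bool) \<Rightarrow> nat \<Rightarrow> 'a \<Rightarrow> real" where
  "Gt \<xi> m \<omega> = real (failures \<xi> m \<omega>) - real (failures \<xi> (m - 1) \<omega>)"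

end

theory Submission
  imports Defs
begin

text \<open>
  Since \<open>\<mu>\<close> is the only stationary distribution and \<open>\<mu>\<cdot>(p - 1/2) = 0\<close>, the Poisson equation
  \<open>g - K g = p - 1/2\<close> has a solution \<open>g\<close>. With it, the centred number of successes
  \<open>S(T) = \<Sum>j\<le>T. (\<xi>(j) - 1/2)\<close> differs by at most \<open>2 max |g|\<close> from a martingale with increments
  bounded by \<open>1 + 2 max |g|\<close>, whose \<open>2k\<close>-th moment grows like \<open>T^k\<close>; hence \<open>E S(T)^10 = O(T^5)\<close>.
  The deviation \<open>F(n) - n\<close> exceeds \<open>t\<close> in absolute value only if \<open>|S(T)| \<ge> t/2\<close> for
  \<open>T = 2n + t\<close> or \<open>T = 2n - t - 1\<close>, so Markov's inequality gives
  \<open>P(|F(n) - n| > t) = O((2n + t)^5 / t^10)\<close>. Summing \<open>4(t+1)^3 P(|F(n) - n| > t)\<close>, with the trivial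
  bound for \<open>t < \<surd>n\<close>, yields \<open>E (F(n) - n)^4 = O(n^2)\<close>.
\<close>

section \<open>The Poisson equation\<close>

definition kernel_mean :: "('s::finite \<Rightarrow> 's \<Rightarrow> real) \<Rightarrow> ('s \<Rightarrow> real) \<Rightarrow> 's \<Rightarrow> real" where
  "kernel_mean K g x = (\<Sum>y\<in>UNIV. K x y * g y)"

lemma nonneg_invariant_eq_multiple:
  fixes K :: "'s::finite \<Rightarrow> 's \<Rightarrow> real"
  assumes uniq: "\<forall>\<nu>. stationary K \<nu> \<longrightarrow> \<nu> = \<mu>"
    and w0: "\<And>x. 0 \<le> w x" and winv: "\<And>y. (\<Sum>x\<in>UNIV. w x * K x y) = w y"
  shows "\<exists>c. \<forall>x. w x = c * \<mu> x"
proof (cases "(\<Sum>x\<in>UNIV. w x) = 0")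
  case True
  then have "\<forall>x. w x = 0" using w0 by (simp add: sum_nonneg_eq_0_iff)
  then show ?thesis by (intro exI[of _ 0]) simp
next
  case False
  define s where "s = (\<Sum>x\<in>UNIV. w x)"
  have s0: "s > 0" using False w0 unfolding s_def by (metis less_eq_real_def sum_nonneg)
  have "stationary K (\<lambda>x. w x / s)"
    unfolding stationary_def prob_vector_def
  proof (intro conjI allI)
    show "0 \<le> w x / s" for x using w0 s0 by simp
    show "(\<Sum>x\<in>UNIV. w x / s) = 1" using s0 by (simp add: s_def[symmetric] sum_divide_distrib[symmetric])
    show "(\<Sum>x\<in>UNIV. w x / s * K x y) = w y / s" for y
      using winv[of y] by (simp add: sum_divide_distrib[symmetric])
  qed
  then have "(\<lambda>x. w x / s) = \<mu>" using uniq by blast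
  then have "\<forall>x. w x = s * \<mu> x" using s0 by (auto simp: fun_eq_iff field_simps)
  then show ?thesis by blast
qed

text \<open>A signed invariant vector \<open>\<nu>\<close>: \<open>|\<nu>|\<close> is superinvariant with the same total mass, hence
  invariant, so \<open>\<nu> = (|\<nu>| + \<nu>)/2 - (|\<nu>| - \<nu>)/2\<close> is a difference of nonnegative invariant vectors.\<close>

lemma invariant_eq_multiple:
  fixes K :: "'s::finite \<Rightarrow> 's \<Rightarrow> real"
  assumes stoch: "stochastic_matrix K" and uniq: "\<forall>\<nu>. stationary K \<nu> \<longrightarrow> \<nu> = \<mu>"
    and inv: "\<And>y. (\<Sum>x\<in>UNIV. \<nu> x * K x y) = \<nu> y"
  shows "\<exists>c. \<forall>x. \<nu> x = c * \<mu> x"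
proof -
  have K0: "\<And>x y. 0 \<le> K x y" and K1: "\<And>x. (\<Sum>y\<in>UNIV. K x y) = 1"
    using stoch unfolding stochastic_matrix_def by auto
  define a where "a x = \<bar>\<nu> x\<bar>" for x
  have super: "a y \<le> (\<Sum>x\<in>UNIV. a x * K x y)" for y
  proof -
    have "a y = \<bar>\<Sum>x\<in>UNIV. \<nu> x * K x y\<bar>" using inv[of y] by (simp add: a_def)
    also have "\<dots> \<le> (\<Sum>x\<in>UNIV. \<bar>\<nu> x * K x y\<bar>)" by (rule sum_abs)
    also have "\<dots> = (\<Sum>x\<in>UNIV. a x * K x y)" using K0 by (simp add: a_def abs_mult)
    finally show ?thesis .
  qed
  have "(\<Sum>y\<in>UNIV. (\<Sum>x\<in>UNIV. a x * K x y)) = (\<Sum>x\<in>UNIV. a x * (\<Sum>y\<in>UNIV. K x y))"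
    by (subst sum.swap) (simp add: sum_distrib_left)
  also have "\<dots> = (\<Sum>y\<in>UNIV. a y)" using K1 by simp
  finally have "(\<Sum>y\<in>UNIV. (\<Sum>x\<in>UNIV. a x * K x y) - a y) = 0" by (simp add: sum_subtractf)
  then have ainv: "(\<Sum>x\<in>UNIV. a x * K x y) = a y" for y
    using super by (subst (asm) sum_nonneg_eq_0_iff) auto
  obtain c1 where c1: "\<forall>x. (a x + \<nu> x) / 2 = c1 * \<mu> x"
  proof (atomize_elim, rule nonneg_invariant_eq_multiple[OF uniq])
    show "0 \<le> (a x + \<nu> x) / 2" for x unfolding a_def by simp
    show "(\<Sum>x\<in>UNIV. (a x + \<nu> x) / 2 * K x y) = (a y + \<nu> y) / 2" for y
      using ainv[of y] inv[of y]
      by (simp add: add_divide_distrib distrib_right sum.distrib sum_divide_distrib[symmetric])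
  qed
  obtain c2 where c2: "\<forall>x. (a x - \<nu> x) / 2 = c2 * \<mu> x"
  proof (atomize_elim, rule nonneg_invariant_eq_multiple[OF uniq])
    show "0 \<le> (a x - \<nu> x) / 2" for x unfolding a_def by simp
    show "(\<Sum>x\<in>UNIV. (a x - \<nu> x) / 2 * K x y) = (a y - \<nu> y) / 2" for y
      using ainv[of y] inv[of y]
      by (simp add: diff_divide_distrib left_diff_distrib sum_subtractf sum_divide_distrib[symmetric])
  qed
  have "\<nu> x = (c1 - c2) * \<mu> x" for x
    using c1[rule_format, of x] c2[rule_format, of x] by (simp add: field_simps)
  then show ?thesis by blast
qed

definition poisson_op :: "('s::finite \<Rightarrow> 's \<Rightarrow> real) \<Rightarrow> real^'s \<Rightarrow> real^'s" where
  "poisson_op K v = (\<chi> x. v$x - (\<Sum>y\<in>UNIV. K x y * v$y))"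

lemma linear_poisson_op: "linear (poisson_op K)"
  by (rule linearI) (simp_all add: poisson_op_def vec_eq_iff algebra_simps sum.distrib sum_distrib_left)

lemma orthogonal_range_poisson_op_invariant:
  assumes "\<And>v. orthogonal z (poisson_op K v)"
  shows "(\<Sum>x\<in>UNIV. z$x * K x y) = z$y"
proof -
  have "0 = (\<Sum>x\<in>UNIV. z$x * ((if x = y then 1 else 0) - (\<Sum>u\<in>UNIV. K x u * (if u = y then 1 else 0))))"
    using assms[of "axis y 1"] by (simp add: orthogonal_def inner_vec_def poisson_op_def axis_def)
  also have "\<dots> = z$y - (\<Sum>x\<in>UNIV. z$x * K x y)"
    by (simp add: right_diff_distrib sum_subtractf if_distrib[of "\<lambda>t. z$_ * t"] mult_ac
        if_distrib[of "\<lambda>t. K _ _ * t"] cong: if_cong)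
  finally show ?thesis by simp
qed

lemma stationary_orthogonal_range_poisson_op:
  assumes "stationary K \<mu>"
  shows "(\<chi> x. \<mu> x) \<bullet> poisson_op K v = 0"
proof -
  have "(\<chi> x. \<mu> x) \<bullet> poisson_op K v
      = (\<Sum>x\<in>UNIV. \<mu> x * v$x) - (\<Sum>x\<in>UNIV. \<Sum>y\<in>UNIV. \<mu> x * K x y * v$y)"
    by (simp add: inner_vec_def poisson_op_def right_diff_distrib sum_subtractf sum_distrib_left mult.assoc)
  also have "(\<Sum>x\<in>UNIV. \<Sum>y\<in>UNIV. \<mu> x * K x y * v$y) = (\<Sum>y\<in>UNIV. (\<Sum>x\<in>UNIV. \<mu> x * K x y) * v$y)"
    by (subst sum.swap) (simp add: sum_distrib_right)
  also have "\<dots> = (\<Sum>y\<in>UNIV. \<mu> y * v$y)" using assms unfolding stationary_def by simp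
  finally show ?thesis by simp
qed

text \<open>Decompose \<open>f = y + z\<close> with \<open>y\<close> in the range of \<open>I - K\<close> and \<open>z\<close> orthogonal to it. Then \<open>z\<close> is
  invariant, hence a multiple of \<open>\<mu>\<close>, and orthogonal to \<open>\<mu>\<close> because \<open>f\<close> and \<open>y\<close> are; so \<open>z = 0\<close>.\<close>

lemma poisson_equation_solvable:
  fixes K :: "'s::finite \<Rightarrow> 's \<Rightarrow> real"
  assumes stoch: "stochastic_matrix K" and stat: "stationary K \<mu>"
    and uniq: "\<forall>\<nu>. stationary K \<nu> \<longrightarrow> \<nu> = \<mu>"
    and centred: "(\<Sum>x\<in>UNIV. \<mu> x * f x) = 0"
  shows "\<exists>g. \<forall>x. g x - kernel_mean K g x = f x"
proof -
  let ?L = "poisson_op K" and ?f = "\<chi> x. f x" and ?\<mu> = "\<chi> x. \<mu> x"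
  have range_L: "span (range ?L) = range ?L"
    by (rule span_eq_iff[THEN iffD2]) (rule linear_subspace_image[OF linear_poisson_op subspace_UNIV])
  obtain y z where y: "y \<in> range ?L" and z: "\<And>w. w \<in> range ?L \<Longrightarrow> orthogonal z w"
    and fyz: "?f = y + z"
    using orthogonal_subspace_decomp_exists[of "range ?L" ?f] unfolding range_L by blast
  obtain c where "\<forall>x. z$x = c * \<mu> x"
    using invariant_eq_multiple[OF stoch uniq, of "\<lambda>x. z$x"] orthogonal_range_poisson_op_invariant[of z K] z
    by blast
  then have zc: "z = c *\<^sub>R ?\<mu>" by (simp add: vec_eq_iff)
  have "?\<mu> \<bullet> y = 0" using y stationary_orthogonal_range_poisson_op[OF stat] by auto
  moreover have "?\<mu> \<bullet> ?f = 0" using centred by (simp add: inner_vec_def)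
  ultimately have "c * (?\<mu> \<bullet> ?\<mu>) = 0" using fyz zc by (simp add: inner_add_right)
  moreover have "?\<mu> \<noteq> 0"
    using stat unfolding stationary_def prob_vector_def by (auto simp: vec_eq_iff) (metis sum.neutral zero_neq_one)
  ultimately have "z = 0" using zc by simp
  with y fyz obtain v where "?L v = ?f" by auto
  then have "\<forall>x. v$x - kernel_mean K (\<lambda>y. v$y) x = f x"
    by (simp add: poisson_op_def vec_eq_iff kernel_mean_def)
  then show ?thesis by blast
qed

definition bernoulli_weight :: "('s \<Rightarrow> real) \<Rightarrow> 's \<Rightarrow> bool \<Rightarrow> real" where
  "bernoulli_weight p r b = (if b then p r else 1 - p r)"

text \<open>A path of length \<open>t\<close> is a pair of lists \<open>(rs, bs)\<close> holding \<open>R(1), \<dots>, R(t)\<close> and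
  \<open>\<xi>(1), \<dots>, \<xi>(t)\<close> at positions \<open>0, \<dots>, t - 1\<close>.\<close>

definition path_prob ::
  "('s \<Rightarrow> 's \<Rightarrow> real) \<Rightarrow> ('s \<Rightarrow> real) \<Rightarrow> ('s \<Rightarrow> real) \<Rightarrow> 's list \<Rightarrow> bool list \<Rightarrow> real" where
  "path_prob K p \<eta> rs bs = \<eta> (rs ! 0) * (\<Prod>j<length rs - 1. K (rs ! j) (rs ! Suc j))
     * (\<Prod>j<length rs. bernoulli_weight p (rs ! j) (bs ! j))"

definition paths :: "nat \<Rightarrow> ('s list \<times> bool list) set" where
  "paths t = {rs. length rs = t} \<times> {bs. length bs = t}"

definition path_expect :: "('s::finite \<Rightarrow> 's \<Rightarrow> real) \<Rightarrow> ('s \<Rightarrow> real) \<Rightarrow> ('s \<Rightarrow> real) \<Rightarrow> nat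
     \<Rightarrow> ('s list \<Rightarrow> bool list \<Rightarrow> real) \<Rightarrow> real" where
  "path_expect K p \<eta> t h = (\<Sum>v\<in>paths t. h (fst v) (snd v) * path_prob K p \<eta> (fst v) (snd v))"

lemma finite_paths [simp]: "finite (paths t :: ('s::finite list \<times> bool list) set)"
  unfolding paths_def by (intro finite_cartesian_product finite_list_length)

lemma path_prob_snoc:
  assumes "length rs = Suc t" "length bs = Suc t"
  shows "path_prob K p \<eta> (rs @ [r]) (bs @ [b])
       = path_prob K p \<eta> rs bs * K (last rs) r * bernoulli_weight p r b"
proof -
  have "last rs = rs ! t" using assms by (metis diff_Suc_1 last_conv_nth list.size(3) nat.distinct(1))
  moreover have "(\<Prod>j<Suc t. K ((rs @ [r]) ! j) ((rs @ [r]) ! Suc j))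
      = (\<Prod>j<t. K (rs ! j) (rs ! Suc j)) * K (rs ! t) r"
    using assms by (simp add: nth_append)
  moreover have "(\<Prod>j<Suc t. bernoulli_weight p ((rs @ [r]) ! j) ((bs @ [b]) ! j))
      = (\<Prod>j<Suc t. bernoulli_weight p (rs ! j) (bs ! j))"
    using assms by (intro prod.cong) (auto simp: nth_append)
  ultimately show ?thesis using assms unfolding path_prob_def by (simp add: nth_append)
qed

lemma paths_Suc: "paths (Suc t) = (\<lambda>(v, r, b). (fst v @ [r], snd v @ [b])) ` (paths t \<times> UNIV)"
proof (rule set_eqI, rule iffI)
  fix x assume "x \<in> paths (Suc t)"
  then obtain rs bs where x: "x = (rs, bs)" "length rs = Suc t" "length bs = Suc t"
    unfolding paths_def by auto
  then obtain rs' r bs' b where "rs = rs' @ [r]" "bs = bs' @ [b]"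
    by (metis append_butlast_last_id list.size(3) nat.distinct(1))
  with x show "x \<in> (\<lambda>(v, r, b). (fst v @ [r], snd v @ [b])) ` (paths t \<times> UNIV)"
    by (intro image_eqI[of _ _ "((rs', bs'), r, b)"]) (auto simp: paths_def)
qed (auto simp: paths_def)

lemma path_expect_Suc:
  fixes K :: "'s::finite \<Rightarrow> 's \<Rightarrow> real"
  assumes "t \<ge> 1"
  shows "path_expect K p \<eta> (Suc t) h = path_expect K p \<eta> t
           (\<lambda>rs bs. \<Sum>r\<in>UNIV. \<Sum>b\<in>UNIV. K (last rs) r * bernoulli_weight p r b * h (rs @ [r]) (bs @ [b]))"
proof -
  let ?ext = "\<lambda>(v, r, b). (fst v @ [r], snd v @ [b])"
  have inj: "inj_on ?ext (paths t \<times> (UNIV :: ('s \<times> bool) set))"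
    by (auto simp: inj_on_def)
  have "path_expect K p \<eta> (Suc t) h
      = (\<Sum>v\<in>paths t. \<Sum>(r, b)\<in>UNIV. h (fst v @ [r]) (snd v @ [b]) * path_prob K p \<eta> (fst v @ [r]) (snd v @ [b]))"
    unfolding path_expect_def paths_Suc sum.reindex[OF inj]
    by (subst sum.cartesian_product) (simp add: split_def)
  also have "\<dots> = (\<Sum>v\<in>paths t. (\<Sum>r\<in>UNIV. \<Sum>b\<in>UNIV. K (last (fst v)) r * bernoulli_weight p r b
                    * h (fst v @ [r]) (snd v @ [b])) * path_prob K p \<eta> (fst v) (snd v))"
  proof (rule sum.cong[OF refl])
    fix v :: "'s list \<times> bool list" assume v: "v \<in> paths t"
    then have "path_prob K p \<eta> (fst v @ [r]) (snd v @ [b])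
        = path_prob K p \<eta> (fst v) (snd v) * K (last (fst v)) r * bernoulli_weight p r b" for r b
      using assms by (intro path_prob_snoc[where t = "t - 1"]) (auto simp: paths_def)
    then show "(\<Sum>(r, b)\<in>UNIV. h (fst v @ [r]) (snd v @ [b]) * path_prob K p \<eta> (fst v @ [r]) (snd v @ [b]))
      = (\<Sum>r\<in>UNIV. \<Sum>b\<in>UNIV. K (last (fst v)) r * bernoulli_weight p r b * h (fst v @ [r]) (snd v @ [b]))
        * path_prob K p \<eta> (fst v) (snd v)"
      by (simp add: UNIV_Times_UNIV[symmetric] sum.cartesian_product[symmetric]
          sum_distrib_left mult_ac del: UNIV_Times_UNIV)
  qed
  finally show ?thesis unfolding path_expect_def .
qed

lemma path_expect_add:
  "path_expect K p \<eta> t (\<lambda>rs bs. h1 rs bs + h2 rs bs) = path_expect K p \<eta> t h1 + path_expect K p \<eta> t h2"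
  unfolding path_expect_def by (simp add: distrib_right sum.distrib)

lemma path_expect_cmult: "path_expect K p \<eta> t (\<lambda>rs bs. c * h rs bs) = c * path_expect K p \<eta> t h"
  unfolding path_expect_def by (simp add: sum_distrib_left mult.assoc)

locale markov_coins =
  fixes K :: "'s::finite \<Rightarrow> 's \<Rightarrow> real" and p :: "'s \<Rightarrow> real" and \<eta> :: "'s \<Rightarrow> real"
    and M :: "'a measure" and R :: "nat \<Rightarrow> 'a \<Rightarrow> 's" and \<xi> :: "nat \<Rightarrow> 'a \<Rightarrow> bool"
  assumes stoch: "stochastic_matrix K" and p_bounds: "\<forall>r. 0 < p r \<and> p r < 1"
    and initial: "prob_vector \<eta>" and law: "has_law K p \<eta> M R \<xi>"
begin

sublocale prob_space M
  using law unfolding has_law_def by simp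

definition state_path :: "nat \<Rightarrow> 'a \<Rightarrow> 's list" where
  "state_path t \<omega> = map (\<lambda>j. R (Suc j) \<omega>) [0..<t]"

definition coin_path :: "nat \<Rightarrow> 'a \<Rightarrow> bool list" where
  "coin_path t \<omega> = map (\<lambda>j. \<xi> (Suc j) \<omega>) [0..<t]"

lemma length_state_path [simp]: "length (state_path t \<omega>) = t"
  by (simp add: state_path_def)

lemma length_coin_path [simp]: "length (coin_path t \<omega>) = t"
  by (simp add: coin_path_def)

lemma K_nonneg: "0 \<le> K x y" and K_sum: "(\<Sum>y\<in>UNIV. K x y) = 1"
  using stoch unfolding stochastic_matrix_def by auto

lemma path_expect_mono:
  assumes "\<And>rs bs. length rs = t \<Longrightarrow> length bs = t \<Longrightarrow> h1 rs bs \<le> h2 rs bs"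
  shows "path_expect K p \<eta> t h1 \<le> path_expect K p \<eta> t h2"
proof -
  have "0 \<le> path_prob K p \<eta> rs bs" for rs bs
    using K_nonneg p_bounds initial unfolding path_prob_def prob_vector_def bernoulli_weight_def
    by (intro mult_nonneg_nonneg prod_nonneg) (auto simp: less_imp_le)
  then show ?thesis
    unfolding path_expect_def using assms by (intro sum_mono mult_right_mono) (auto simp: paths_def)
qed

lemma path_eq_iff:
  assumes "(rs, bs) \<in> paths t"
  shows "(state_path t \<omega>, coin_path t \<omega>) = (rs, bs)
     \<longleftrightarrow> (\<forall>j<t. R (Suc j) \<omega> = rs ! j \<and> \<xi> (Suc j) \<omega> = bs ! j)"
proof -
  have "state_path t \<omega> = rs \<longleftrightarrow> (\<forall>j<t. R (Suc j) \<omega> = rs ! j)"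
    "coin_path t \<omega> = bs \<longleftrightarrow> (\<forall>j<t. \<xi> (Suc j) \<omega> = bs ! j)"
    using assms unfolding paths_def state_path_def coin_path_def list_eq_iff_nth_eq by force+
  then show ?thesis by auto
qed

lemma sets_path_eq: "{\<omega> \<in> space M. (state_path t \<omega>, coin_path t \<omega>) = v} \<in> sets M"
proof (cases "v \<in> paths t")
  case True
  obtain rs bs where v: "v = (rs, bs)" by fastforce
  have [measurable]: "R j \<in> M \<rightarrow>\<^sub>M count_space UNIV" "\<xi> j \<in> M \<rightarrow>\<^sub>M count_space UNIV" for j
    using law unfolding has_law_def by auto
  have "{\<omega> \<in> space M. \<forall>j<t. R (Suc j) \<omega> = rs ! j \<and> \<xi> (Suc j) \<omega> = bs ! j} \<in> sets M"
    by measurable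
  with path_eq_iff True show ?thesis unfolding v by presburger
next
  case False
  then have "{\<omega> \<in> space M. (state_path t \<omega>, coin_path t \<omega>) = v} = {}"
    by (auto simp: paths_def)
  then show ?thesis by (metis sets.empty_sets)
qed

lemma measure_path_eq:
  assumes "t \<ge> 1" "v \<in> paths t"
  shows "measure M {\<omega> \<in> space M. (state_path t \<omega>, coin_path t \<omega>) = v} = path_prob K p \<eta> (fst v) (snd v)"
proof -
  obtain rs bs where v: "v = (rs, bs)" "length rs = t" "length bs = t"
    using assms by (auto simp: paths_def)
  have "measure M {\<omega> \<in> space M. \<forall>j<t. R (Suc j) \<omega> = rs ! j \<and> \<xi> (Suc j) \<omega> = bs ! j}
        = \<eta> (rs ! 0) * (\<Prod>j<t - 1. K (rs ! j) (rs ! Suc j))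
            * (\<Prod>j<t. if bs ! j then p (rs ! j) else 1 - p (rs ! j))"
    using law assms v unfolding has_law_def by blast
  then show ?thesis
    using path_eq_iff[of rs bs t] assms v by (simp add: path_prob_def bernoulli_weight_def)
qed

lemma path_event_eq:
  "{\<omega> \<in> space M. Q (state_path t \<omega>) (coin_path t \<omega>)}
   = (\<Union>v\<in>{v\<in>paths t. Q (fst v) (snd v)}. {\<omega> \<in> space M. (state_path t \<omega>, coin_path t \<omega>) = v})"
  by (auto simp: paths_def)

lemma sets_path_event: "{\<omega> \<in> space M. Q (state_path t \<omega>) (coin_path t \<omega>)} \<in> sets M"
  unfolding path_event_eq by (rule sets.finite_UN) (simp, rule sets_path_eq)

lemma measure_path_event:
  assumes "t \<ge> 1"
  shows "measure M {\<omega> \<in> space M. Q (state_path t \<omega>) (coin_path t \<omega>)}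
       = path_expect K p \<eta> t (\<lambda>rs bs. of_bool (Q rs bs))"
proof -
  have "measure M {\<omega> \<in> space M. Q (state_path t \<omega>) (coin_path t \<omega>)}
      = (\<Sum>v\<in>{v\<in>paths t. Q (fst v) (snd v)}. measure M {\<omega> \<in> space M. (state_path t \<omega>, coin_path t \<omega>) = v})"
    unfolding path_event_eq
    by (rule finite_measure_finite_Union)
       (simp, rule image_subsetI, rule sets_path_eq, auto simp: disjoint_family_on_def)
  also have "\<dots> = (\<Sum>v\<in>{v\<in>paths t. Q (fst v) (snd v)}. path_prob K p \<eta> (fst v) (snd v))"
    using assms by (intro sum.cong) (auto simp: measure_path_eq)
  also have "\<dots> = path_expect K p \<eta> t (\<lambda>rs bs. of_bool (Q rs bs))"
    unfolding path_expect_def sum.inter_filter[OF finite_paths] by (intro sum.cong) auto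
  finally show ?thesis .
qed

lemma path_expect_one: "t \<ge> 1 \<Longrightarrow> path_expect K p \<eta> t (\<lambda>_ _. 1) = 1"
  using measure_path_event[of t "\<lambda>_ _. True"] by (simp add: prob_space)

end

section \<open>A martingale with bounded increments\<close>

text \<open>Both \<open>\<xi>(j) - p(R(j))\<close> and \<open>g(R(j)) - (K g)(R(j-1))\<close> have conditional mean zero given
  the past, which is what \<open>conditional_moment_step\<close> exploits.\<close>

definition martingale_incr ::
  "('s::finite \<Rightarrow> 's \<Rightarrow> real) \<Rightarrow> ('s \<Rightarrow> real) \<Rightarrow> ('s \<Rightarrow> real) \<Rightarrow> 's list \<Rightarrow> bool list \<Rightarrow> nat \<Rightarrow> real" where
  "martingale_incr K p g rs bs j = of_bool (bs ! j) - p (rs ! j)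
     + (if j = 0 then 0 else g (rs ! j) - kernel_mean K g (rs ! (j - 1)))"

definition martingale ::
  "('s::finite \<Rightarrow> 's \<Rightarrow> real) \<Rightarrow> ('s \<Rightarrow> real) \<Rightarrow> ('s \<Rightarrow> real) \<Rightarrow> 's list \<Rightarrow> bool list \<Rightarrow> real" where
  "martingale K p g rs bs = (\<Sum>j<length rs. martingale_incr K p g rs bs j)"

definition centred_successes :: "'s list \<Rightarrow> bool list \<Rightarrow> real" where
  "centred_successes rs bs = (\<Sum>j<length rs. of_bool (bs ! j)) - real (length rs) / 2"

lemma martingale_snoc:
  assumes "length bs = length rs" "rs \<noteq> []"
  shows "martingale K p g (rs @ [r]) (bs @ [b])
       = martingale K p g rs bs + (of_bool b - p r + g r - kernel_mean K g (last rs))"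
proof -
  have "(\<Sum>j<length rs. martingale_incr K p g (rs @ [r]) (bs @ [b]) j)
      = (\<Sum>j<length rs. martingale_incr K p g rs bs j)"
    using assms by (intro sum.cong) (auto simp: martingale_incr_def nth_append)
  moreover have "martingale_incr K p g (rs @ [r]) (bs @ [b]) (length rs)
      = of_bool b - p r + g r - kernel_mean K g (last rs)"
    using assms by (simp add: martingale_incr_def nth_append last_conv_nth)
  ultimately show ?thesis unfolding martingale_def by simp
qed

lemma centred_successes_snoc:
  assumes "length bs = length rs"
  shows "centred_successes (rs @ [r]) (bs @ [b]) = centred_successes rs bs + of_bool b - 1/2"
proof -
  have "(\<Sum>j<length rs. of_bool ((bs @ [b]) ! j)) = (\<Sum>j<length rs. of_bool (bs ! j) :: real)"
    using assms by (intro sum.cong) (auto simp: nth_append)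
  then show ?thesis using assms unfolding centred_successes_def by (simp add: field_simps nth_append)
qed

lemma centred_successes_eq_martingale:
  assumes poisson: "\<And>x. g x - kernel_mean K g x = p x - 1/2"
    and "length rs = Suc n" "length bs = Suc n"
  shows "centred_successes rs bs = martingale K p g rs bs + g (rs ! 0) - kernel_mean K g (last rs)"
  using assms(2,3)
proof (induction n arbitrary: rs bs)
  case 0
  then obtain r b where "rs = [r]" "bs = [b]" by (metis length_0_conv length_Suc_conv)
  then show ?case using poisson[of r] by (simp add: centred_successes_def martingale_def martingale_incr_def)
next
  case (Suc n)
  obtain rs' r bs' b where rs: "rs = rs' @ [r]" and bs: "bs = bs' @ [b]"
    using Suc.prems by (metis append_butlast_last_id list.size(3) nat.distinct(1))
  have l: "length rs' = Suc n" "length bs' = Suc n" and "rs' \<noteq> []" using Suc.prems rs bs by auto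
  have "centred_successes rs bs = centred_successes rs' bs' + of_bool b - 1/2"
    unfolding rs bs by (rule centred_successes_snoc) (simp add: l)
  also have "\<dots> = martingale K p g rs' bs' + g (rs' ! 0) - kernel_mean K g (last rs') + of_bool b - 1/2"
    using Suc.IH[OF l] by simp
  also have "\<dots> = martingale K p g rs bs + g (rs ! 0) - kernel_mean K g (last rs)"
    unfolding rs bs using martingale_snoc[of bs' rs' K p g r b] l \<open>rs' \<noteq> []\<close> poisson[of r]
    by (simp add: nth_append)
  finally show ?case .
qed

text \<open>Binomial expansion of \<open>(x + d)^(2k+2)\<close>: the linear term averages out against a martingale
  increment, and every higher term is bounded using \<open>|x|^i \<le> 1 + x^(2k)\<close> for \<open>i \<le> 2k\<close>.\<close>

lemma even_power_add_le:
  fixes x d c :: real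
  assumes "\<bar>d\<bar> \<le> c"
  shows "(x + d) ^ (2*k+2) \<le> x ^ (2*k+2) + (2*k+2) * x ^ (2*k+1) * d + (1 + c) ^ (2*k+2) * (1 + x ^ (2*k))"
proof -
  define n where "n = 2*k+2"
  have c0: "0 \<le> c" using assms by linarith
  have pw: "\<bar>x\<bar> ^ i \<le> 1 + x ^ (2*k)" if "i \<le> 2*k" for i
  proof (cases "\<bar>x\<bar> \<le> 1")
    case True
    then show ?thesis by (simp add: power_le_one add_increasing2 zero_le_power_eq)
  next
    case False
    then have "\<bar>x\<bar> ^ i \<le> \<bar>x\<bar> ^ (2*k)" using that by (intro power_increasing) auto
    then show ?thesis by (simp add: power_even_abs)
  qed
  have high: "(\<Sum>i\<in>{2..n}. of_nat (n choose i) * d ^ i * x ^ (n - i)) \<le> (1 + c) ^ n * (1 + x ^ (2*k))"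
  proof -
    have "(\<Sum>i\<in>{2..n}. of_nat (n choose i) * d ^ i * x ^ (n - i))
        \<le> (\<Sum>i\<in>{2..n}. of_nat (n choose i) * c ^ i * (1 + x ^ (2*k)))"
    proof (rule sum_mono)
      fix i assume i: "i \<in> {2..n}"
      have "of_nat (n choose i) * d ^ i * x ^ (n - i) \<le> of_nat (n choose i) * \<bar>d\<bar> ^ i * \<bar>x\<bar> ^ (n - i)"
        using abs_ge_self[of "of_nat (n choose i) * d ^ i * x ^ (n - i)"] by (simp add: abs_mult power_abs)
      also have "\<dots> \<le> of_nat (n choose i) * c ^ i * (1 + x ^ (2*k))"
        using i assms pw[of "n - i"] unfolding n_def
        by (intro mult_mono mult_left_mono power_mono) (auto simp: zero_le_mult_iff)
      finally show "of_nat (n choose i) * d ^ i * x ^ (n - i) \<le> of_nat (n choose i) * c ^ i * (1 + x ^ (2*k))" .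
    qed
    also have "\<dots> = (\<Sum>i\<in>{2..n}. of_nat (n choose i) * c ^ i) * (1 + x ^ (2*k))"
      by (simp add: sum_distrib_right)
    also have "\<dots> \<le> (\<Sum>i\<le>n. of_nat (n choose i) * c ^ i) * (1 + x ^ (2*k))"
      using c0 by (intro mult_right_mono sum_mono2) (auto simp: add_nonneg_nonneg)
    also have "(\<Sum>i\<le>n. of_nat (n choose i) * c ^ i) = (1 + c) ^ n"
      using binomial_ring[of c 1 n] by (simp add: add.commute)
    finally show ?thesis .
  qed
  have "(x + d) ^ n = (\<Sum>i\<le>n. of_nat (n choose i) * d ^ i * x ^ (n - i))"
    by (subst add.commute) (rule binomial_ring)
  also have "\<dots> = x ^ n + of_nat n * d * x ^ (n - 1) + (\<Sum>i\<in>{2..n}. of_nat (n choose i) * d ^ i * x ^ (n - i))"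
  proof -
    have "{..n} = {0, 1} \<union> {2..n}" unfolding n_def by auto
    then show ?thesis by (simp add: sum.union_disjoint n_def)
  qed
  finally show ?thesis using high unfolding n_def by (simp add: mult_ac add.commute)
qed

fun moment_const :: "real \<Rightarrow> nat \<Rightarrow> real" where
  "moment_const c 0 = 1"
| "moment_const c (Suc k) = 1 + (1 + c) ^ (2*k+2) * (1 + moment_const c k)"

lemma moment_const_ge_1: "0 \<le> c \<Longrightarrow> 1 \<le> moment_const c k"
  by (induction k) (auto simp: add_nonneg_nonneg)

definition tenth_moment_const :: "real \<Rightarrow> real" where
  "tenth_moment_const G = 2 ^ 10 * (moment_const (1 + 2 * G) 5 + (2 * G) ^ 10)"

lemma power_add_le_two_power:
  fixes u v :: real assumes "0 \<le> u" "0 \<le> v"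
  shows "(u + v) ^ k \<le> 2 ^ k * (u ^ k + v ^ k)"
proof -
  have "(u + v) ^ k \<le> (2 * max u v) ^ k" using assms by (intro power_mono) auto
  also have "\<dots> = 2 ^ k * max u v ^ k" by (simp add: power_mult_distrib)
  also have "max u v ^ k \<le> u ^ k + v ^ k" using assms by (cases "u \<le> v") (auto simp: max_def)
  finally show ?thesis by simp
qed

text \<open>All constants below depend on the chain only through the bound \<open>G\<close> on \<open>|g|\<close>, which is
  what makes the final constant independent of the initial distribution.\<close>

locale poisson_solution = markov_coins K p \<eta> M R \<xi>
  for K :: "'s::finite \<Rightarrow> 's \<Rightarrow> real" and p \<eta> and M :: "'a measure" and R \<xi> +
  fixes g :: "'s \<Rightarrow> real" and G :: real
  assumes poisson: "\<And>x. g x - kernel_mean K g x = p x - 1/2"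
    and g_bound: "\<And>x. \<bar>g x\<bar> \<le> G"
begin

definition moment :: "nat \<Rightarrow> nat \<Rightarrow> real" where
  "moment k t = path_expect K p \<eta> t (\<lambda>rs bs. martingale K p g rs bs ^ (2*k))"

lemma G_nonneg: "0 \<le> G"
  using g_bound by (meson abs_ge_zero order_trans)

lemma kernel_mean_bound: "\<bar>kernel_mean K g x\<bar> \<le> G"
proof -
  have "\<bar>kernel_mean K g x\<bar> \<le> (\<Sum>y\<in>UNIV. \<bar>K x y * g y\<bar>)" unfolding kernel_mean_def by (rule sum_abs)
  also have "\<dots> \<le> (\<Sum>y\<in>UNIV. K x y * G)"
    by (intro sum_mono) (simp add: abs_mult K_nonneg g_bound mult_left_mono)
  also have "\<dots> = G" by (simp add: sum_distrib_right[symmetric] K_sum)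
  finally show ?thesis .
qed

lemma abs_coin_minus_p_le_1: "\<bar>of_bool b - p r\<bar> \<le> 1"
  using p_bounds[rule_format, of r] by (cases b) auto

lemma martingale_incr_bound: "\<bar>of_bool b - p r + g r - kernel_mean K g y\<bar> \<le> 1 + 2 * G"
  using abs_coin_minus_p_le_1[of b r] g_bound[of r] kernel_mean_bound[of y] by linarith

lemma conditional_moment_step:
  "(\<Sum>r\<in>UNIV. \<Sum>b\<in>UNIV. K y r * bernoulli_weight p r b
      * (x + (of_bool b - p r + g r - kernel_mean K g y)) ^ (2*k+2))
    \<le> x ^ (2*k+2) + (2 + 2 * G) ^ (2*k+2) * (1 + x ^ (2*k))"
proof -
  define B where "B = (2 + 2 * G) ^ (2*k+2) * (1 + x ^ (2*k))"
  define F where "F r b = x ^ (2*k+2) + (2 * real k + 2) * x ^ (2*k+1)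
                    * (of_bool b - p r + g r - kernel_mean K g y) + B" for r b
  have "0 \<le> K y r * bernoulli_weight p r b" for r b
    using K_nonneg p_bounds by (auto simp: bernoulli_weight_def less_imp_le)
  then have "(\<Sum>r\<in>UNIV. \<Sum>b\<in>UNIV. K y r * bernoulli_weight p r b
               * (x + (of_bool b - p r + g r - kernel_mean K g y)) ^ (2*k+2))
     \<le> (\<Sum>r\<in>UNIV. \<Sum>b\<in>UNIV. K y r * bernoulli_weight p r b * F r b)"
    unfolding F_def B_def
    using even_power_add_le[OF martingale_incr_bound] by (intro sum_mono mult_left_mono) (auto simp: add.assoc)
  also have "\<dots> = (\<Sum>r\<in>UNIV. (x ^ (2*k+2) + B) * K y r
                + (2 * real k + 2) * x ^ (2*k+1) * (K y r * g r)
                - ((2 * real k + 2) * x ^ (2*k+1) * kernel_mean K g y) * K y r)"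
    unfolding F_def UNIV_bool by (intro sum.cong) (auto simp: bernoulli_weight_def algebra_simps)
  also have "\<dots> = x ^ (2*k+2) + B"
    by (simp add: sum.distrib sum_subtractf sum_distrib_left[symmetric] K_sum kernel_mean_def[symmetric])
  finally show ?thesis unfolding B_def .
qed

lemma moment_at_one_le: "moment k 1 \<le> 1"
proof -
  have "moment k 1 \<le> path_expect K p \<eta> 1 (\<lambda>_ _. 1)"
    unfolding moment_def
  proof (rule path_expect_mono)
    fix rs :: "'s list" and bs :: "bool list" assume "length rs = 1" "length bs = 1"
    then have "martingale K p g rs bs = of_bool (bs ! 0) - p (rs ! 0)"
      by (simp add: martingale_def martingale_incr_def)
    then have "\<bar>martingale K p g rs bs\<bar> ^ (2*k) \<le> 1"
      using abs_coin_minus_p_le_1 by (simp add: power_le_one)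
    then show "martingale K p g rs bs ^ (2*k) \<le> 1" by (simp add: power_even_abs)
  qed
  then show ?thesis by (simp add: path_expect_one)
qed

lemma moment_Suc_step:
  assumes "t \<ge> 1"
  shows "moment (Suc k) (Suc t) \<le> moment (Suc k) t + (2 + 2 * G) ^ (2*k+2) * (1 + moment k t)"
proof -
  let ?Mt = "martingale K p g"
  have "moment (Suc k) (Suc t) = path_expect K p \<eta> t (\<lambda>rs bs. \<Sum>r\<in>UNIV. \<Sum>b\<in>UNIV.
          K (last rs) r * bernoulli_weight p r b * ?Mt (rs @ [r]) (bs @ [b]) ^ (2*k+2))"
    unfolding moment_def by (simp add: path_expect_Suc[OF assms])
  also have "\<dots> \<le> path_expect K p \<eta> t (\<lambda>rs bs. ?Mt rs bs ^ (2*k+2)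
                   + (2 + 2 * G) ^ (2*k+2) * (1 + ?Mt rs bs ^ (2*k)))"
  proof (rule path_expect_mono)
    fix rs :: "'s list" and bs :: "bool list" assume l: "length rs = t" "length bs = t"
    with assms have "rs \<noteq> []" by auto
    with l show "(\<Sum>r\<in>UNIV. \<Sum>b\<in>UNIV. K (last rs) r * bernoulli_weight p r b * ?Mt (rs @ [r]) (bs @ [b]) ^ (2*k+2))
        \<le> ?Mt rs bs ^ (2*k+2) + (2 + 2 * G) ^ (2*k+2) * (1 + ?Mt rs bs ^ (2*k))"
      using conditional_moment_step[of "last rs" "?Mt rs bs" k] by (simp add: martingale_snoc)
  qed
  also have "\<dots> = path_expect K p \<eta> t (\<lambda>rs bs. ?Mt rs bs ^ (2*k+2))
      + (2 + 2 * G) ^ (2*k+2) * (path_expect K p \<eta> t (\<lambda>_ _. 1) + path_expect K p \<eta> t (\<lambda>rs bs. ?Mt rs bs ^ (2*k)))"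
    by (simp only: path_expect_add path_expect_cmult)
  also have "\<dots> = moment (Suc k) t + (2 + 2 * G) ^ (2*k+2) * (1 + moment k t)"
    by (simp add: moment_def path_expect_one[OF assms])
  finally show ?thesis .
qed

lemma moment_bound: "t \<ge> 1 \<Longrightarrow> moment k t \<le> moment_const (1 + 2 * G) k * real t ^ k"
proof (induction k arbitrary: t)
  case 0
  then show ?case by (simp add: moment_def path_expect_one)
next
  case (Suc k)
  note moment_k = Suc.IH
  let ?C = "moment_const (1 + 2 * G)"
  define B where "B = (2 + 2 * G) ^ (2*k+2)"
  have B0: "0 \<le> B" and C0: "0 \<le> ?C (Suc k)"
    using G_nonneg moment_const_ge_1[of "1 + 2 * G" "Suc k"] by (auto simp: B_def)
  show ?case using Suc.prems
  proof (induction t rule: nat_induct_at_least)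
    case base
    then show ?case using moment_at_one_le[of "Suc k"] moment_const_ge_1[of "1 + 2 * G" "Suc k"] G_nonneg by simp
  next
    case (Suc t)
    have tk: "1 \<le> real t ^ k" using Suc.hyps by (simp add: one_le_power)
    have "moment (Suc k) (Suc t) \<le> moment (Suc k) t + B * (1 + moment k t)"
      unfolding B_def using moment_Suc_step[OF Suc.hyps] .
    also have "\<dots> \<le> ?C (Suc k) * real t ^ Suc k + B * ((1 + ?C k) * real t ^ k)"
      using Suc.IH moment_k[OF Suc.hyps] B0 tk
      by (intro add_mono mult_left_mono) (auto simp: algebra_simps)
    also have "B * ((1 + ?C k) * real t ^ k) \<le> ?C (Suc k) * real t ^ k"
      using tk by (simp add: B_def mult.assoc[symmetric] mult_right_mono)
    also have "?C (Suc k) * real t ^ Suc k + ?C (Suc k) * real t ^ k \<le> ?C (Suc k) * real (Suc t) ^ Suc k"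
    proof -
      have "real t ^ k \<le> (real t + 1) ^ k" by (intro power_mono) auto
      then have "real t ^ Suc k + real t ^ k \<le> (real t + 1) ^ Suc k"
        using mult_left_mono[of "real t ^ k" "(real t + 1) ^ k" "real t"] by (simp add: algebra_simps)
      then show ?thesis using C0 by (simp add: distrib_left[symmetric] mult_left_mono add.commute)
    qed
    finally show ?case by simp
  qed
qed

lemma tenth_moment_bound:
  assumes "t \<ge> 1"
  shows "path_expect K p \<eta> t (\<lambda>rs bs. centred_successes rs bs ^ 10) \<le> tenth_moment_const G * real t ^ 5"
proof -
  let ?Mt = "martingale K p g"
  have "path_expect K p \<eta> t (\<lambda>rs bs. centred_successes rs bs ^ 10)
     \<le> path_expect K p \<eta> t (\<lambda>rs bs. 2 ^ 10 * (?Mt rs bs ^ 10 + (2 * G) ^ 10 * 1))"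
  proof (rule path_expect_mono)
    fix rs :: "'s list" and bs :: "bool list" assume l: "length rs = t" "length bs = t"
    then obtain n where "length rs = Suc n" "length bs = Suc n" using assms by (cases t) auto
    then have "centred_successes rs bs = ?Mt rs bs + g (rs ! 0) - kernel_mean K g (last rs)"
      by (rule centred_successes_eq_martingale[OF poisson])
    then have "\<bar>centred_successes rs bs\<bar> \<le> \<bar>?Mt rs bs\<bar> + 2 * G"
      using g_bound[of "rs ! 0"] kernel_mean_bound[of "last rs"] by linarith
    then have "\<bar>centred_successes rs bs\<bar> ^ 10 \<le> (\<bar>?Mt rs bs\<bar> + 2 * G) ^ 10" by (intro power_mono) auto
    also have "\<dots> \<le> 2 ^ 10 * (\<bar>?Mt rs bs\<bar> ^ 10 + (2 * G) ^ 10)"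
      using G_nonneg by (intro power_add_le_two_power) auto
    finally show "centred_successes rs bs ^ 10 \<le> 2 ^ 10 * (?Mt rs bs ^ 10 + (2 * G) ^ 10 * 1)"
      by (simp add: power_even_abs)
  qed
  also have "\<dots> = 2 ^ 10 * (moment 5 t + (2 * G) ^ 10)"
    by (simp only: path_expect_cmult path_expect_add path_expect_one[OF assms] moment_def) simp
  also have "\<dots> \<le> 2 ^ 10 * (moment_const (1 + 2 * G) 5 * real t ^ 5 + (2 * G) ^ 10 * real t ^ 5)"
  proof -
    have "(2 * G) ^ 10 * 1 \<le> (2 * G) ^ 10 * real t ^ 5"
      using G_nonneg assms by (intro mult_left_mono) (auto simp: one_le_power)
    then show ?thesis using moment_bound[OF assms, of 5] by simp
  qed
  also have "\<dots> = tenth_moment_const G * real t ^ 5"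
    unfolding tenth_moment_const_def by (simp add: algebra_simps)
  finally show ?thesis .
qed

lemma tenth_moment_const_nonneg: "0 \<le> tenth_moment_const G"
  unfolding tenth_moment_const_def using moment_const_ge_1[of "1 + 2 * G" 5] G_nonneg by simp

lemma path_prob_deviation_le:
  assumes "t \<ge> 1" "a > 0"
    and dev: "\<And>rs bs. length rs = t \<Longrightarrow> length bs = t \<Longrightarrow> Q rs bs \<Longrightarrow> a \<le> \<bar>centred_successes rs bs\<bar>"
  shows "path_expect K p \<eta> t (\<lambda>rs bs. of_bool (Q rs bs)) \<le> tenth_moment_const G * real t ^ 5 / a ^ 10"
proof -
  have "path_expect K p \<eta> t (\<lambda>rs bs. of_bool (Q rs bs))
      \<le> path_expect K p \<eta> t (\<lambda>rs bs. (1 / a ^ 10) * centred_successes rs bs ^ 10)"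
  proof (rule path_expect_mono)
    fix rs :: "'s list" and bs :: "bool list" assume l: "length rs = t" "length bs = t"
    show "of_bool (Q rs bs) \<le> 1 / a ^ 10 * centred_successes rs bs ^ 10"
    proof (cases "Q rs bs")
      case True
      then have "a ^ 10 \<le> \<bar>centred_successes rs bs\<bar> ^ 10"
        using assms(2) dev[OF l] by (intro power_mono) auto
      then show ?thesis using True assms(2) by (simp add: power_even_abs field_simps)
    qed (simp add: zero_le_even_power)
  qed
  also have "\<dots> \<le> (1 / a ^ 10) * (tenth_moment_const G * real t ^ 5)"
    unfolding path_expect_cmult using tenth_moment_bound[OF assms(1)] assms(2) by (intro mult_left_mono) auto
  finally show ?thesis by simp
qed

end

section \<open>Counting failures\<close>

definition successes :: "(nat \<Rightarrow> 'a \<Rightarrow> bool) \<Rightarrow> nat \<Rightarrow> 'a \<Rightarrow> nat" where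
  "successes \<xi> T \<omega> = (\<Sum>j=1..T. if \<xi> j \<omega> then 1 else 0)"

lemma failures_eq_Least: "failures \<xi> m \<omega> = (LEAST k. successes \<xi> (k + m) \<omega> = m)"
  unfolding failures_def successes_def by simp

lemma successes_Suc: "successes \<xi> (Suc T) \<omega> = successes \<xi> T \<omega> + (if \<xi> (Suc T) \<omega> then 1 else 0)"
  unfolding successes_def by simp

lemma successes_mono: "T \<le> T' \<Longrightarrow> successes \<xi> T \<omega> \<le> successes \<xi> T' \<omega>"
  by (induction T' rule: dec_induct) (auto simp: successes_Suc)

lemma successes_le: "successes \<xi> T \<omega> \<le> T"
  by (induction T) (auto simp: successes_Suc successes_def[of _ 0])

lemma less_failures_iff:
  assumes "successes \<xi> (k0 + n) \<omega> = n"
  shows "m < failures \<xi> n \<omega> \<longleftrightarrow> successes \<xi> (m + n) \<omega> < n"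
proof -
  define f where "f = failures \<xi> n \<omega>"
  have f: "successes \<xi> (f + n) \<omega> = n"
    unfolding f_def failures_eq_Least by (rule LeastI[of _ k0]) (rule assms)
  have "m < f \<Longrightarrow> successes \<xi> (m + n) \<omega> \<noteq> n"
    unfolding f_def failures_eq_Least by (rule not_less_Least)
  then show ?thesis unfolding f_def[symmetric]
    using successes_mono[of "m + n" "f + n" \<xi> \<omega>] successes_mono[of "f + n" "m + n" \<xi> \<omega>] f
    by (cases "m < f") auto
qed

lemma successes_less_if_never_reached:
  assumes "\<forall>k. successes \<xi> (k + n) \<omega> \<noteq> n"
  shows "successes \<xi> (k + n) \<omega> < n"
proof (induction k)
  case 0
  then show ?case using assms successes_le[of \<xi> n \<omega>] by (metis add_0 order_le_imp_less_or_eq)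
next
  case (Suc k)
  then show ?case using assms[rule_format, of "Suc k"] by (auto simp: successes_Suc split: if_splits)
qed

lemma sum_Gt_minus_one: "(\<Sum>i=1..n. Gt \<xi> i \<omega> - 1) = real (failures \<xi> n \<omega>) - real n"
proof (induction n)
  case 0
  have "failures \<xi> 0 \<omega> = 0"
    unfolding failures_eq_Least by (rule Least_eq_0) (simp add: successes_def)
  then show ?case by simp
qed (simp add: Gt_def)

lemma fourth_power_le_sum: "real X ^ 4 \<le> (\<Sum>t<X. 4 * (real t + 1) ^ 3)"
proof (induction X)
  case (Suc X)
  have "real (Suc X) ^ 4 - real X ^ 4 \<le> 4 * (real X + 1) ^ 3"
    by (simp add: eval_nat_numeral algebra_simps)
  then show ?case using Suc by simp
qed simp

section \<open>Summing the tail bounds\<close>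

lemma suminf_inverse_square_tail_le:
  fixes s :: nat assumes "s \<ge> 1"
  shows "summable (\<lambda>t. 1 / (real t + real s + 1)^2) \<and> (\<Sum>t. 1 / (real t + real s + 1)^2) \<le> 1 / real s"
proof -
  define f where "f t = 1 / (real s + real t)" for t
  have "f \<longlonglongrightarrow> 0"
    unfolding f_def
    by (intro tendsto_divide_0[OF tendsto_const] filterlim_at_top_imp_at_infinity
        filterlim_tendsto_add_at_top[OF tendsto_const filterlim_real_sequentially])
  then have tel: "(\<lambda>t. f t - f (Suc t)) sums (1 / real s)" using telescope_sums' by (fastforce simp: f_def)
  have le: "1 / (real t + real s + 1)^2 \<le> f t - f (Suc t)" for t
  proof -
    have pos: "0 < real t + real s" using assms by simp
    have "f t - f (Suc t) = 1 / ((real t + real s) * (real t + real s + 1))"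
      unfolding f_def using pos by (simp add: field_simps)
    then show ?thesis
      using pos by (simp add: power2_eq_square divide_left_mono mult_pos_pos)
  qed
  have sm: "summable (\<lambda>t. 1 / (real t + real s + 1)^2)"
    by (rule summable_comparison_test'[OF sums_summable[OF tel]]) (use le in auto)
  with le tel show ?thesis using suminf_le[OF le sm sums_summable[OF tel]] sums_unique[OF tel] by simp
qed

lemma suminf_le_split:
  fixes a :: "nat \<Rightarrow> real" and s :: nat
  assumes "s \<ge> 1" "\<And>t. 0 \<le> a t" "\<And>t. t < s \<Longrightarrow> a t \<le> B" "\<And>t. s \<le> t \<Longrightarrow> a t \<le> L / (real t + 1)^2"
    and "0 \<le> L"
  shows "summable a \<and> suminf a \<le> real s * B + L / real s"
proof -
  define u where "u t = (if t < s then B else L / (real t + 1) ^ 2)" for t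
  have au: "a t \<le> u t" for t using assms(3,4) by (auto simp: u_def not_less)
  obtain ts: "summable (\<lambda>t. 1 / (real t + real s + 1)^2)" "(\<Sum>t. 1 / (real t + real s + 1)^2) \<le> 1 / real s"
    using suminf_inverse_square_tail_le[OF assms(1)] by blast
  have shift: "u (t + s) = L * (1 / (real t + real s + 1)^2)" for t unfolding u_def by simp
  have su: "summable u"
    using summable_mult[OF ts(1), of L] unfolding shift[symmetric] by (simp add: summable_iff_shift)
  have "suminf u = L * (\<Sum>t. 1 / (real t + real s + 1)^2) + real s * B"
    using suminf_split_initial_segment[OF su, of s] suminf_mult[OF ts(1), of L]
    by (simp add: shift u_def)
  also have "\<dots> \<le> L / real s + real s * B"
    using mult_left_mono[OF ts(2) assms(5)] by simp
  finally have "suminf u \<le> real s * B + L / real s" by simp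
  moreover have "summable a" by (rule summable_comparison_test'[OF su]) (use assms(2) au in auto)
  ultimately show ?thesis using suminf_le[OF au _ su] by simp
qed

lemma tail_term_le:
  fixes N S T C :: real
  assumes N0: "0 \<le> N" and C0: "0 \<le> C" and S1: "1 \<le> S" and ST: "S \<le> T"
  shows "C * (2 * N + T) ^ 5 * (T + 1) ^ 3 / T ^ 10 \<le> 32768 * C * (N ^ 5 / S ^ 5 + 1) / (T + 1) ^ 2"
proof -
  have T1: "1 \<le> T" and Tp: "0 < T" using S1 ST by linarith+
  have T2: "(T + 1) ^ j \<le> 2 ^ j * T ^ j" for j
    using power_mono[of "T + 1" "2 * T" j] T1 by (simp add: power_mult_distrib)
  have "(2 * N + T) ^ 5 \<le> 2 ^ 5 * ((2 * N) ^ 5 + T ^ 5)"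
    using N0 Tp by (intro power_add_le_two_power) auto
  also have "\<dots> \<le> 1024 * (N ^ 5 + T ^ 5)" using N0 Tp by (simp add: power_mult_distrib)
  finally have "(2 * N + T) ^ 5 * (T + 1) ^ 3 \<le> 1024 * (N ^ 5 + T ^ 5) * (8 * T ^ 3)"
    using T2[of 3] Tp N0 by (intro mult_mono) auto
  then have "C * (2 * N + T) ^ 5 * (T + 1) ^ 3 / T ^ 10 \<le> C * (1024 * (N ^ 5 + T ^ 5) * (8 * T ^ 3)) / T ^ 10"
    using C0 Tp by (simp add: divide_right_mono mult_left_mono mult.assoc)
  also have "\<dots> = 8192 * C * (N ^ 5 / T ^ 7 + 1 / T ^ 2)"
    using Tp by (simp add: field_simps power_add[symmetric] eval_nat_numeral)
  also have "\<dots> \<le> 8192 * C * (N ^ 5 / (S ^ 5 * T ^ 2) + 1 / T ^ 2)"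
  proof -
    have "S ^ 5 * T ^ 2 \<le> T ^ 5 * T ^ 2" using S1 ST by (intro mult_right_mono power_mono) auto
    then have "N ^ 5 / T ^ 7 \<le> N ^ 5 / (S ^ 5 * T ^ 2)"
      using S1 Tp N0 by (intro divide_left_mono) (auto simp: power_add[symmetric])
    then show ?thesis using C0 by (intro mult_left_mono) auto
  qed
  also have "\<dots> = 8192 * C * (N ^ 5 / S ^ 5 + 1) * (1 / T ^ 2)"
    using S1 Tp by (simp add: field_simps)
  also have "\<dots> \<le> 8192 * C * (N ^ 5 / S ^ 5 + 1) * (4 / (T + 1) ^ 2)"
    using T2[of 2] Tp C0 N0 S1 by (intro mult_left_mono) (auto simp: field_simps)
  finally show ?thesis by simp
qed

lemma exists_nat_square_between: "n \<ge> 1 \<Longrightarrow> \<exists>s::nat. 1 \<le> s \<and> real n \<le> real s ^ 2 \<and> real s ^ 2 \<le> 4 * real n"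
proof -
  assume n: "n \<ge> 1"
  define r where "r = sqrt (real n)"
  have r1: "1 \<le> r" unfolding r_def using n by simp
  define s where "s = nat \<lceil>r\<rceil>"
  have sr: "r \<le> real s" "real s \<le> 2 * r" unfolding s_def using r1 by linarith+
  have "real n = r ^ 2" unfolding r_def by simp
  moreover have "r ^ 2 \<le> real s ^ 2" "real s ^ 2 \<le> (2 * r) ^ 2"
    using sr r1 by (intro power_mono; simp)+
  ultimately show ?thesis using sr r1 by (intro exI[of _ s]) (auto simp: power_mult_distrib)
qed

text \<open>The split point is \<open>s \<approx> \<surd>n\<close>: below it the trivial bound contributes \<open>O(s^4)\<close>, above it
  the tail contributes \<open>O(n^5 / s^6)\<close>.\<close>

lemma tail_series_bound:
  fixes a :: "nat \<Rightarrow> real"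
  assumes n: "n \<ge> 1" and C: "C \<ge> 0" and a0: "\<And>t. 0 \<le> a t"
    and trivial: "\<And>t. a t \<le> 8 * (real t + 1) ^ 3"
    and tail: "\<And>t. t \<ge> 1 \<Longrightarrow> a t \<le> C * (2 * real n + real t) ^ 5 * (real t + 1) ^ 3 / real t ^ 10"
  shows "summable a \<and> suminf a \<le> (128 + 65536 * C) * real n ^ 2"
proof -
  obtain s where s1: "1 \<le> s" and ns: "real n \<le> real s ^ 2" and sn: "real s ^ 2 \<le> 4 * real n"
    using exists_nat_square_between[OF n] by blast
  define L where "L = 32768 * C * (real n ^ 5 / real s ^ 5 + 1)"
  have split: "summable a \<and> suminf a \<le> real s * (8 * real s ^ 3) + L / real s"
  proof (rule suminf_le_split[OF s1 a0])
    show "a t \<le> 8 * real s ^ 3" if "t < s" for t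
    proof -
      have "(real t + 1) ^ 3 \<le> real s ^ 3" using that by (intro power_mono) auto
      then show ?thesis using trivial[of t] by linarith
    qed
    show "a t \<le> L / (real t + 1) ^ 2" if "s \<le> t" for t
      using tail[of t] tail_term_le[of "real n" C "real s" "real t"] that s1 C unfolding L_def by simp
    show "0 \<le> L" unfolding L_def using C by simp
  qed
  have "real s * (8 * real s ^ 3) \<le> 128 * real n ^ 2"
    using power_mono[OF sn, of 2] by (simp add: power_mult_distrib eval_nat_numeral)
  moreover have "L / real s \<le> 65536 * C * real n ^ 2"
  proof -
    have "real n ^ 3 \<le> real s ^ 6" using power_mono[OF ns, of 3] by (simp add: power_mult[symmetric])
    then have "real n ^ 5 / real s ^ 6 \<le> real n ^ 5 / real n ^ 3"
      using n s1 by (intro divide_left_mono) auto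
    also have "\<dots> = real n ^ 2" using n by (simp add: field_simps eval_nat_numeral)
    moreover have "1 / real s \<le> real n ^ 2" using n s1 by (simp add: one_le_power order_trans[of _ 1])
    ultimately have "real n ^ 5 / real s ^ 6 + 1 / real s \<le> real n ^ 2 + real n ^ 2" by linarith
    then have "32768 * C * (real n ^ 5 / real s ^ 6 + 1 / real s) \<le> 32768 * C * (real n ^ 2 + real n ^ 2)"
      using C by (intro mult_left_mono) auto
    moreover have "L / real s = 32768 * C * (real n ^ 5 / real s ^ 6 + 1 / real s)"
      unfolding L_def using s1 by (simp add: field_simps eval_nat_numeral)
    ultimately show ?thesis by simp
  qed
  ultimately have "real s * (8 * real s ^ 3) + L / real s \<le> (128 + 65536 * C) * real n ^ 2"
    unfolding distrib_right by (rule add_mono)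
  with split show ?thesis by (meson order_trans)
qed

section \<open>Deviation events of the number of failures\<close>

definition fourth_moment_const :: "real \<Rightarrow> real" where
  "fourth_moment_const G = 128 + 65536 * (2 ^ 13 * tenth_moment_const G)"

context poisson_solution
begin

lemma successes_eq_coin_count: "successes \<xi> T \<omega> = (\<Sum>j<T. of_bool (coin_path T \<omega> ! j))"
proof -
  have "successes \<xi> T \<omega> = (\<Sum>j<T. of_bool (\<xi> (Suc j) \<omega>))"
    by (induction T) (simp_all add: successes_Suc successes_def[of _ 0])
  then show ?thesis by (simp add: coin_path_def)
qed

text \<open>\<open>too_few_successes n t\<close> is \<open>{F(n) > n + t}\<close> and \<open>too_many_successes n t\<close> is \<open>{F(n) < n - t}\<close>.\<close>

definition too_few_successes :: "nat \<Rightarrow> nat \<Rightarrow> 'a set" where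
  "too_few_successes n t = {\<omega> \<in> space M. successes \<xi> (2*n + t) \<omega> < n}"

definition too_many_successes :: "nat \<Rightarrow> nat \<Rightarrow> 'a set" where
  "too_many_successes n t = {\<omega> \<in> space M. t < n \<and> n \<le> successes \<xi> (2*n - t - 1) \<omega>}"

definition deviation_event :: "nat \<Rightarrow> nat \<Rightarrow> 'a set" where
  "deviation_event n t = too_few_successes n t \<union> too_many_successes n t"

definition never_n_successes :: "nat \<Rightarrow> 'a set" where
  "never_n_successes n = {\<omega> \<in> space M. \<forall>k. successes \<xi> (k + n) \<omega> \<noteq> n}"

lemma sets_successes_event: "{\<omega> \<in> space M. Q (successes \<xi> T \<omega>)} \<in> sets M"
  using sets_path_event[of "\<lambda>rs bs. Q (\<Sum>j<T. of_bool (bs ! j))" T] by (simp add: successes_eq_coin_count)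

lemma sets_too_few_successes: "too_few_successes n t \<in> sets M"
  unfolding too_few_successes_def by (rule sets_successes_event[of "\<lambda>c. c < n"])

lemma sets_too_many_successes: "too_many_successes n t \<in> sets M"
  unfolding too_many_successes_def by (rule sets_successes_event[of "\<lambda>c. t < n \<and> n \<le> c"])

lemma sets_deviation_event: "deviation_event n t \<in> sets M"
  unfolding deviation_event_def by (intro sets.Un sets_too_few_successes sets_too_many_successes)

lemma sets_never_n_successes: "never_n_successes n \<in> sets M"
  unfolding never_n_successes_def
  by (intro sets.sets_Collect_countable_All) (rule sets_successes_event[of "\<lambda>c. c \<noteq> n"])

lemma measure_successes_deviation:
  assumes "t \<ge> 1" "T \<ge> 1" "\<And>c. Q c \<Longrightarrow> real t / 2 \<le> \<bar>real c - real T / 2\<bar>"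
  shows "measure M {\<omega> \<in> space M. Q (successes \<xi> T \<omega>)}
       \<le> 2 ^ 10 * tenth_moment_const G * real T ^ 5 / real t ^ 10"
proof -
  have "measure M {\<omega> \<in> space M. Q (successes \<xi> T \<omega>)}
      = path_expect K p \<eta> T (\<lambda>rs bs. of_bool (Q (\<Sum>j<T. of_bool (bs ! j))))"
    using measure_path_event[OF assms(2), of "\<lambda>rs bs. Q (\<Sum>j<T. of_bool (bs ! j))"]
    by (simp add: successes_eq_coin_count)
  also have "\<dots> \<le> tenth_moment_const G * real T ^ 5 / (real t / 2) ^ 10"
  proof (rule path_prob_deviation_le[OF assms(2)])
    fix rs :: "'s list" and bs :: "bool list"
    assume "length rs = T" "length bs = T" "Q (\<Sum>j<T. of_bool (bs ! j))"
    then show "real t / 2 \<le> \<bar>centred_successes rs bs\<bar>"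
      using assms(3) by (simp add: centred_successes_def)
  qed (use assms in simp)
  finally show ?thesis by (simp add: power_divide mult_ac)
qed

lemma measure_too_few_successes:
  assumes "t \<ge> 1"
  shows "measure M (too_few_successes n t) \<le> 2 ^ 10 * tenth_moment_const G * (2 * real n + real t) ^ 5 / real t ^ 10"
proof -
  have "real t / 2 \<le> \<bar>real c - real (2*n + t) / 2\<bar>" if "c < n" for c
    using that by (simp add: abs_if) (simp add: field_simps)
  then have "measure M (too_few_successes n t) \<le> 2 ^ 10 * tenth_moment_const G * real (2*n + t) ^ 5 / real t ^ 10"
    unfolding too_few_successes_def using assms by (intro measure_successes_deviation) auto
  then show ?thesis by simp
qed

lemma measure_too_many_successes:
  assumes "t \<ge> 1"
  shows "measure M (too_many_successes n t) \<le> 2 ^ 10 * tenth_moment_const G * (2 * real n + real t) ^ 5 / real t ^ 10"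
proof (cases "t < n")
  case True
  then have "real t / 2 \<le> \<bar>real c - real (2*n - t - 1) / 2\<bar>" if "n \<le> c" for c
    using that by (simp add: abs_if of_nat_diff) (simp add: field_simps)
  then have "measure M (too_many_successes n t) \<le> 2 ^ 10 * tenth_moment_const G * real (2*n - t - 1) ^ 5 / real t ^ 10"
    unfolding too_many_successes_def using assms True by (intro measure_successes_deviation) auto
  also have "\<dots> \<le> 2 ^ 10 * tenth_moment_const G * (2 * real n + real t) ^ 5 / real t ^ 10"
    using tenth_moment_const_nonneg by (intro divide_right_mono mult_left_mono power_mono) auto
  finally show ?thesis .
qed (use tenth_moment_const_nonneg in \<open>simp add: too_many_successes_def\<close>)

lemma measure_deviation_event:
  assumes "t \<ge> 1"
  shows "measure M (deviation_event n t) \<le> 2 ^ 11 * tenth_moment_const G * (2 * real n + real t) ^ 5 / real t ^ 10"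
proof -
  have "measure M (deviation_event n t) \<le> measure M (too_few_successes n t) + measure M (too_many_successes n t)"
    unfolding deviation_event_def by (intro measure_Un_le sets_too_few_successes sets_too_many_successes)
  then show ?thesis
    using measure_too_few_successes[where n = n, OF assms] measure_too_many_successes[where n = n, OF assms] by simp
qed

lemma never_n_successes_null:
  assumes "n \<ge> 1"
  shows "never_n_successes n \<in> null_sets M"
proof -
  let ?C = "2 ^ 15 * tenth_moment_const G"
  have "measure M (never_n_successes n) \<le> ?C / real t" if t: "t \<ge> 2 * n" for t
  proof -
    have t1: "t \<ge> 1" using t assms by simp
    have "never_n_successes n \<subseteq> too_few_successes n t"
    proof
      fix \<omega> assume "\<omega> \<in> never_n_successes n"
      then show "\<omega> \<in> too_few_successes n t"
        using successes_less_if_never_reached[of \<xi> n \<omega> "n + t"]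
        unfolding never_n_successes_def too_few_successes_def by (simp add: mult_2 add.commute add.left_commute)
    qed
    then have "measure M (never_n_successes n) \<le> measure M (too_few_successes n t)"
      by (intro finite_measure_mono sets_too_few_successes)
    also have "\<dots> \<le> 2 ^ 10 * tenth_moment_const G * (2 * real n + real t) ^ 5 / real t ^ 10"
      by (rule measure_too_few_successes[OF t1])
    also have "\<dots> \<le> 2 ^ 10 * tenth_moment_const G * (2 * real t) ^ 5 / real t ^ 10"
      using t tenth_moment_const_nonneg by (intro divide_right_mono mult_left_mono power_mono) auto
    also have "\<dots> = ?C / real t ^ 5" using t1 by (simp add: power_mult_distrib field_simps eval_nat_numeral)
    also have "\<dots> \<le> ?C / real t"
      using t1 tenth_moment_const_nonneg by (intro divide_left_mono) (auto simp: self_le_power)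
    finally show ?thesis .
  qed
  then have "measure M (never_n_successes n) \<le> 0"
    by (intro LIMSEQ_le_const[OF lim_const_over_n[of ?C]]) auto
  then show ?thesis
    using sets_never_n_successes by (auto simp: emeasure_eq_measure null_sets_def measure_le_0_iff)
qed

lemma in_deviation_event:
  assumes "\<omega> \<in> space M" "\<omega> \<notin> never_n_successes n" "real t < \<bar>real (failures \<xi> n \<omega>) - real n\<bar>"
  shows "\<omega> \<in> deviation_event n t"
proof -
  obtain k0 where "successes \<xi> (k0 + n) \<omega> = n" using assms(1,2) unfolding never_n_successes_def by auto
  note less_iff = less_failures_iff[OF this]
  consider "n + t < failures \<xi> n \<omega>" | "t < n" "failures \<xi> n \<omega> \<le> n - t - 1" using assms(3) by linarith
  then show ?thesis
  proof cases
    case 1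
    then have "successes \<xi> (n + t + n) \<omega> < n" using less_iff by blast
    then show ?thesis using assms(1)
      unfolding deviation_event_def too_few_successes_def by (simp add: mult_2 add.commute add.left_commute)
  next
    case 2
    then have "\<not> successes \<xi> (n - t - 1 + n) \<omega> < n" using less_iff[of "n - t - 1"] by linarith
    moreover have "n - t - 1 + n = 2 * n - t - 1" using 2 by simp
    ultimately show ?thesis using 2 assms(1) unfolding deviation_event_def too_many_successes_def by auto
  qed
qed

lemma fourth_moment_le_tail_sum:
  assumes "\<omega> \<in> space M" "\<omega> \<notin> never_n_successes n"
  shows "ennreal ((\<Sum>i=1..n. Gt \<xi> i \<omega> - 1) ^ 4)
     \<le> (\<Sum>t. ennreal (4 * (real t + 1) ^ 3) * indicator (deviation_event n t) \<omega>)"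
proof -
  define X where "X = nat \<bar>int (failures \<xi> n \<omega>) - int n\<bar>"
  have X: "real X = \<bar>real (failures \<xi> n \<omega>) - real n\<bar>" unfolding X_def by simp
  have "(\<Sum>i=1..n. Gt \<xi> i \<omega> - 1) ^ 4 = \<bar>real (failures \<xi> n \<omega>) - real n\<bar> ^ 4"
    unfolding sum_Gt_minus_one by (simp add: power_even_abs)
  also have "\<dots> = real X ^ 4" by (simp add: X)
  also have "\<dots> \<le> (\<Sum>t<X. 4 * (real t + 1) ^ 3)" by (rule fourth_power_le_sum)
  finally have "ennreal ((\<Sum>i=1..n. Gt \<xi> i \<omega> - 1) ^ 4) \<le> ennreal (\<Sum>t<X. 4 * (real t + 1) ^ 3)"
    by (rule ennreal_leI)
  also have "\<dots> = (\<Sum>t<X. ennreal (4 * (real t + 1) ^ 3))" by (rule sum_ennreal[symmetric]) simp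
  also have "\<dots> = (\<Sum>t<X. ennreal (4 * (real t + 1) ^ 3) * indicator (deviation_event n t) \<omega>)"
    using in_deviation_event[OF assms] X by (intro sum.cong) auto
  also have "\<dots> \<le> (\<Sum>t. ennreal (4 * (real t + 1) ^ 3) * indicator (deviation_event n t) \<omega>)"
    by (rule sum_le_suminf) (auto intro: summableI)
  finally show ?thesis .
qed

lemma fourth_moment_bound:
  assumes n: "n \<ge> 1"
  shows "(\<integral>\<^sup>+ \<omega>. ennreal ((\<Sum>i=1..n. Gt \<xi> i \<omega> - 1) ^ 4) \<partial>M) \<le> ennreal (fourth_moment_const G * real n ^ 2)"
proof -
  define a where "a t = 4 * (real t + 1) ^ 3 * measure M (deviation_event n t)" for t
  have ser: "summable a \<and> suminf a \<le> fourth_moment_const G * real n ^ 2"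
    unfolding fourth_moment_const_def
  proof (rule tail_series_bound[OF n])
    show "0 \<le> 2 ^ 13 * tenth_moment_const G" using tenth_moment_const_nonneg by simp
    show "a t \<le> 8 * (real t + 1) ^ 3" for t
      using prob_le_1[of "deviation_event n t"] unfolding a_def by (simp add: order_trans[of _ 1])
    show "a t \<le> 2 ^ 13 * tenth_moment_const G * (2 * real n + real t) ^ 5 * (real t + 1) ^ 3 / real t ^ 10"
      if "t \<ge> 1" for t
      using mult_left_mono[OF measure_deviation_event[OF that], of "4 * (real t + 1) ^ 3" n]
      unfolding a_def by (simp add: field_simps)
  qed (simp add: a_def)
  have "AE \<omega> in M. ennreal ((\<Sum>i=1..n. Gt \<xi> i \<omega> - 1) ^ 4)
      \<le> (\<Sum>t. ennreal (4 * (real t + 1) ^ 3) * indicator (deviation_event n t) \<omega>)"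
    using AE_not_in[OF never_n_successes_null[OF n]] AE_space
    by eventually_elim (rule fourth_moment_le_tail_sum)
  then have "(\<integral>\<^sup>+ \<omega>. ennreal ((\<Sum>i=1..n. Gt \<xi> i \<omega> - 1) ^ 4) \<partial>M)
     \<le> (\<integral>\<^sup>+ \<omega>. (\<Sum>t. ennreal (4 * (real t + 1) ^ 3) * indicator (deviation_event n t) \<omega>) \<partial>M)"
    by (rule nn_integral_mono_AE)
  also have "\<dots> = (\<Sum>t. ennreal (a t))"
    using sets_deviation_event
    by (simp add: nn_integral_suminf nn_integral_cmult_indicator emeasure_eq_measure a_def ennreal_mult)
  also have "\<dots> = ennreal (suminf a)"
    using ser by (intro suminf_ennreal2) (simp_all add: a_def[abs_def])
  also have "\<dots> \<le> ennreal (fourth_moment_const G * real n ^ 2)"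
    using ser by (intro ennreal_leI) simp
  finally show ?thesis .
qed

end

lemma fourth_moment_const_pos: "0 \<le> G \<Longrightarrow> 0 < fourth_moment_const G"
  unfolding fourth_moment_const_def tenth_moment_const_def
  using moment_const_ge_1[of "1 + 2 * G" 5] by (simp add: add_pos_nonneg)

theorem lemmaA3:
  fixes K :: "'s::finite \<Rightarrow> 's \<Rightarrow> real" and p :: "'s \<Rightarrow> real" and \<mu> :: "'s \<Rightarrow> real"
  assumes "stochastic_matrix K"
    and "\<exists>!C. closed_irreducible K C"
    and "stationary K \<mu>" and "\<forall>\<nu>. stationary K \<nu> \<longrightarrow> \<nu> = \<mu>"
    and "\<forall>r. 0 < p r \<and> p r < 1"
    and "(\<Sum>r\<in>UNIV. \<mu> r * p r) = 1/2"
  shows "\<exists>A>0. \<forall>(\<eta> :: 's \<Rightarrow> real) (M :: 'a measure) R \<xi>.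
           prob_vector \<eta> \<longrightarrow> has_law K p \<eta> M R \<xi> \<longrightarrow>
           (\<forall>n\<ge>1. (\<integral>\<^sup>+ \<omega>. ennreal ((\<Sum>i=1..n. Gt \<xi> i \<omega> - 1) ^ 4) \<partial>M)
                     \<le> ennreal (A * real n ^ 2))"
proof -
  have "(\<Sum>x\<in>UNIV. \<mu> x) = 1" using assms(3) unfolding stationary_def prob_vector_def by simp
  then have "(\<Sum>x\<in>UNIV. \<mu> x * (p x - 1/2)) = 0"
    using assms(6) by (simp add: right_diff_distrib sum_subtractf sum_divide_distrib[symmetric])
  then obtain g where g: "\<forall>x. g x - kernel_mean K g x = p x - 1/2"
    using poisson_equation_solvable[OF assms(1,3,4), of "\<lambda>x. p x - 1/2"] by blast
  define G where "G = (\<Sum>x\<in>UNIV. \<bar>g x\<bar>)"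
  have g_le: "\<bar>g x\<bar> \<le> G" for x unfolding G_def by (rule member_le_sum) auto
  have "prob_vector \<eta> \<Longrightarrow> has_law K p \<eta> M R \<xi> \<Longrightarrow> n \<ge> 1 \<Longrightarrow>
      (\<integral>\<^sup>+ \<omega>. ennreal ((\<Sum>i=1..n. Gt \<xi> i \<omega> - 1) ^ 4) \<partial>M) \<le> ennreal (fourth_moment_const G * real n ^ 2)"
    for \<eta> and M :: "'a measure" and R \<xi> n
    by (rule poisson_solution.fourth_moment_bound, unfold_locales) (use assms(1,5) g g_le in auto)
  moreover have "0 < fourth_moment_const G"
    using g_le[of undefined] by (intro fourth_moment_const_pos) linarith
  ultimately show ?thesis by blast
qed

end
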